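(* If an $n$-agent network is $k$-redundant, then for any subset $\mathcal S\subset\mathcal V$ with $|\mathcal S|\ge n-k$, $$\arg\min_x\sum_{i\in\mathcal S}\|A_ix-b_i\|_2^2=\mathcal X^*.$$
   Context: An $n$-agent network: agents $\mathcal V=\{1,\dots,n\}$, each agent $i$ having real matrices $A_i\in\mathbb R^{r_i\times d}$, $b_i\in\mathbb R^{r_i}$; $\mathcal X^*=\arg\min_x\sum_{i=1}^n\|A_ix-b_i\|_2^2$ (the set of least squares solutions of $Ax=b$, $A,b$ the stackings of the $A_i,b_i$). The network is $k$-redundant ($k\in\{0,1,\dots,n-1\}$) if for any $\mathcal S_1,\mathcal S_2\subset\mathcal V$ with $|\mathcal S_1|=|\mathcal S_2|=n-k$, $\arg\min_x\sum_{i\in\mathcal S_1}\|A_ix-b_i\|_2^2=\arg\min_x\sum_{i\in\mathcal S_2}\|A_ix-b_i\|_2^2$. *)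

theory Defs
  imports "Jordan_Normal_Form.Matrix"
begin

definition sq_residual :: "real mat \<Rightarrow> real vec \<Rightarrow> real vec \<Rightarrow> real" where
  "sq_residual M c x = (\<Sum>j<dim_vec (M *\<^sub>v x - c). ((M *\<^sub>v x - c) $ j)\<^sup>2)"

definition agg_cost :: "(nat \<Rightarrow> real mat) \<Rightarrow> (nat \<Rightarrow> real vec) \<Rightarrow> nat set \<Rightarrow> real vec \<Rightarrow> real" where
  "agg_cost A b S x = (\<Sum>i\<in>S. sq_residual (A i) (b i) x)"

definition argmin_vec :: "nat \<Rightarrow> (real vec \<Rightarrow> real) \<Rightarrow> real vec set" where
  "argmin_vec d f = {x \<in> carrier_vec d. \<forall>y \<in> carrier_vec d. f x \<le> f y}"

definition k_redundant :: "nat \<Rightarrow> nat \<Rightarrow> (nat \<Rightarrow> real mat) \<Rightarrow> (nat \<Rightarrow> real vec) \<Rightarrow> nat \<Rightarrow> bool" where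
  "k_redundant n d A b k \<longleftrightarrow>
     (\<forall>S1 S2. S1 \<subseteq> {1..n} \<longrightarrow> S2 \<subseteq> {1..n} \<longrightarrow> card S1 = n - k \<longrightarrow> card S2 = n - k \<longrightarrow>
        argmin_vec d (agg_cost A b S1) = argmin_vec d (agg_cost A b S2))"

end

theory Submission
  imports Defs
begin

text \<open>
  Fix a set \<open>T\<^sub>0\<close> of \<open>n - k\<close> agents; by redundancy every set of \<open>n - k\<close> agents has the
  same set \<open>X\<close> of minimizers as \<open>T\<^sub>0\<close>, and \<open>X\<close> is nonempty because the normal
  equations of a linear least squares problem are solvable (by induction on the number of
  columns). Going up in cardinality, if \<open>|S| \<ge> 2\<close> then the cost of \<open>S\<close> is
  \<open>1/(|S| - 1)\<close> times the sum of the costs of the sets \<open>S - {j}\<close>. If these all have the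
  minimizers \<open>X\<close>, so does their sum: a point of \<open>X\<close> minimizes every summand, and a
  minimizer of the sum attains the common minimum value, hence minimizes every summand too.
\<close>

definition argmin_on :: "'a set \<Rightarrow> ('a \<Rightarrow> 'b::linorder) \<Rightarrow> 'a set" where
  "argmin_on C f = {x \<in> C. \<forall>y \<in> C. f x \<le> f y}"

lemma argmin_vec_eq_argmin_on: "argmin_vec d f = argmin_on (carrier_vec d) f"
  by (simp add: argmin_vec_def argmin_on_def)

lemma sum_leave_one_out:
  fixes g :: "'i \<Rightarrow> 'b::comm_ring_1"
  assumes "finite S"
  shows "(\<Sum>j\<in>S. \<Sum>i\<in>S - {j}. g i) = (of_nat (card S) - 1) * (\<Sum>i\<in>S. g i)"
proof -
  have "(\<Sum>j\<in>S. \<Sum>i\<in>S - {j}. g i) = (\<Sum>j\<in>S. (\<Sum>i\<in>S. g i) - g j)"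
    using assms by (intro sum.cong) (auto simp: sum_diff1)
  then show ?thesis
    by (simp add: sum_subtractf algebra_simps)
qed

lemma argmin_on_sum_if_argmin_on_leave_one_out:
  fixes f :: "'i \<Rightarrow> 'a \<Rightarrow> real"
  assumes fin: "finite S" and two: "2 \<le> card S"
    and X: "\<And>j. j \<in> S \<Longrightarrow> argmin_on C (\<lambda>x. \<Sum>i\<in>S - {j}. f i x) = X"
    and "X \<noteq> {}"
  shows "argmin_on C (\<lambda>x. \<Sum>i\<in>S. f i x) = X"
proof -
  define F where "F T = (\<lambda>x. \<Sum>i\<in>T. f i x)" for T
  define c :: real where "c = of_nat (card S) - 1"
  have c: "c > 0"
    using two by (simp add: c_def)
  have leave_one_out: "(\<Sum>j\<in>S. F (S - {j}) x) = c * F S x" for x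
    unfolding F_def c_def by (rule sum_leave_one_out[OF fin])
  obtain j where j: "j \<in> S"
    using two by fastforce
  have X_F: "argmin_on C (F (S - {i})) = X" if "i \<in> S" for i
    using X[OF that] by (simp add: F_def)
  have X_min: "F (S - {i}) x \<le> F (S - {i}) y" if "x \<in> X" "i \<in> S" "y \<in> C" for x y i
    using X_F[OF that(2)] that(1,3) by (auto simp: argmin_on_def)
  have X_C: "X \<subseteq> C"
    using X_F[OF j] by (auto simp: argmin_on_def)
  have X_sub: "X \<subseteq> argmin_on C (F S)"
  proof
    fix x assume x: "x \<in> X"
    have "c * F S x \<le> c * F S y" if y: "y \<in> C" for y
      unfolding leave_one_out[symmetric] by (rule sum_mono) (use X_min x y in blast)
    then show "x \<in> argmin_on C (F S)"
      using X_C x c by (auto simp: argmin_on_def)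
  qed
  moreover have "argmin_on C (F S) \<subseteq> X"
  proof
    fix y assume y: "y \<in> argmin_on C (F S)"
    obtain x where x: "x \<in> X"
      using \<open>X \<noteq> {}\<close> by blast
    have yC: "y \<in> C"
      using y by (simp add: argmin_on_def)
    have "F S y = F S x"
      using y X_sub x yC by (auto simp: argmin_on_def intro: order.antisym)
    then have "(\<Sum>i\<in>S. F (S - {i}) y - F (S - {i}) x) = 0"
      by (simp add: sum_subtractf leave_one_out)
    moreover have "\<forall>i\<in>S. F (S - {i}) y - F (S - {i}) x \<ge> 0"
      using X_min[OF x _ yC] by (simp only: diff_ge_0_iff_ge) blast
    ultimately have "\<forall>i\<in>S. F (S - {i}) y - F (S - {i}) x = 0"
      using sum_nonneg_eq_0_iff[OF fin, of "\<lambda>i. F (S - {i}) y - F (S - {i}) x"] by blast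
    then have "F (S - {j}) y = F (S - {j}) x"
      using j by simp
    then have "y \<in> argmin_on C (F (S - {j}))"
      using X_min[OF x j] yC by (simp add: argmin_on_def)
    then show "y \<in> X"
      using X_F[OF j] by simp
  qed
  ultimately show ?thesis
    by (simp add: F_def)
qed

lemma argmin_on_sum_constant_above_card:
  fixes f :: "'i \<Rightarrow> 'a \<Rightarrow> real"
  assumes V: "finite V" and m: "0 < m"
    and X: "\<And>T. T \<subseteq> V \<Longrightarrow> card T = m \<Longrightarrow> argmin_on C (\<lambda>x. \<Sum>i\<in>T. f i x) = X"
    and "X \<noteq> {}"
    and T: "T \<subseteq> V" "m \<le> card T"
  shows "argmin_on C (\<lambda>x. \<Sum>i\<in>T. f i x) = X"
proof -
  have "\<forall>T. T \<subseteq> V \<longrightarrow> card T = m + l \<longrightarrow> argmin_on C (\<lambda>x. \<Sum>i\<in>T. f i x) = X" for l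
  proof (induction l)
    case 0
    then show ?case
      using X by simp
  next
    case (Suc l)
    show ?case
    proof (intro allI impI)
      fix T assume T: "T \<subseteq> V" "card T = m + Suc l"
      then have "finite T"
        using V finite_subset by blast
      moreover have "argmin_on C (\<lambda>x. \<Sum>i\<in>T - {j}. f i x) = X" if "j \<in> T" for j
      proof -
        have "T - {j} \<subseteq> V" "card (T - {j}) = m + l"
          using T that \<open>finite T\<close> by auto
        then show ?thesis
          using Suc.IH by blast
      qed
      moreover have "2 \<le> card T"
        using T m by simp
      ultimately show "argmin_on C (\<lambda>x. \<Sum>i\<in>T. f i x) = X"
        using argmin_on_sum_if_argmin_on_leave_one_out \<open>X \<noteq> {}\<close> by blast
    qed
  qed
  then show ?thesis
    using T by (metis le_add_diff_inverse)
qed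

definition matvec :: "('r \<Rightarrow> nat \<Rightarrow> real) \<Rightarrow> nat \<Rightarrow> (nat \<Rightarrow> real) \<Rightarrow> 'r \<Rightarrow> real" where
  "matvec a d x i = (\<Sum>j<d. a i j * x j)"

definition lsq_cost ::
    "('r \<Rightarrow> nat \<Rightarrow> real) \<Rightarrow> ('r \<Rightarrow> real) \<Rightarrow> nat \<Rightarrow> 'r set \<Rightarrow> (nat \<Rightarrow> real) \<Rightarrow> real" where
  "lsq_cost a c d I x = (\<Sum>i\<in>I. (matvec a d x i - c i)\<^sup>2)"

lemma matvec_0 [simp]: "matvec a 0 x i = 0"
  by (simp add: matvec_def)

lemma matvec_Suc: "matvec a (Suc d) x i = matvec a d x i + a i d * x d"
  by (simp add: matvec_def)

lemma matvec_add: "matvec a d (\<lambda>j. x j + y j) i = matvec a d x i + matvec a d y i"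
  by (simp add: matvec_def sum.distrib algebra_simps)

lemma matvec_diff: "matvec a d (\<lambda>j. x j - y j) i = matvec a d x i - matvec a d y i"
  by (simp add: matvec_def sum_subtractf algebra_simps)

lemma matvec_scale: "matvec a d (\<lambda>j. t * x j) i = t * matvec a d x i"
  by (simp add: matvec_def sum_distrib_left algebra_simps)

lemma matvec_cong: "(\<And>j. j < d \<Longrightarrow> x j = y j) \<Longrightarrow> matvec a d x i = matvec a d y i"
  by (simp add: matvec_def)

lemma lsq_cost_cong: "(\<And>j. j < d \<Longrightarrow> x j = y j) \<Longrightarrow> lsq_cost a c d I x = lsq_cost a c d I y"
  unfolding lsq_cost_def using matvec_cong[of d x y a] by simp

lemma scalar_normal_equation_solvable:
  fixes w r :: "'i \<Rightarrow> real"
  assumes "finite I"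
  shows "\<exists>t. (\<Sum>i\<in>I. (t * w i - r i) * w i) = 0"
proof (cases "(\<Sum>i\<in>I. (w i)\<^sup>2) = 0")
  case True
  then have "\<forall>i\<in>I. w i = 0"
    using sum_nonneg_eq_0_iff[OF assms, of "\<lambda>i. (w i)\<^sup>2"] by simp
  then show ?thesis
    by simp
next
  case False
  define t where "t = (\<Sum>i\<in>I. r i * w i) / (\<Sum>i\<in>I. (w i)\<^sup>2)"
  have "(\<Sum>i\<in>I. (t * w i - r i) * w i) = t * (\<Sum>i\<in>I. (w i)\<^sup>2) - (\<Sum>i\<in>I. r i * w i)"
    by (simp add: sum_subtractf sum_distrib_left power2_eq_square algebra_simps)
  also have "\<dots> = 0"
    using False by (simp add: t_def)
  finally show ?thesis ..
qed

text \<open>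
  Adjoining the column \<open>d\<close>, only its component \<open>w\<close> orthogonal to the first \<open>d\<close> columns
  matters, and the remaining one-dimensional problem is solved explicitly.
\<close>
lemma normal_equations_solvable:
  assumes fin: "finite I"
  shows "\<exists>x. \<forall>z. (\<Sum>i\<in>I. (matvec a d x i - c i) * matvec a d z i) = 0"
proof (induction d arbitrary: c)
  case 0
  show ?case
    by simp
next
  case (Suc d)
  obtain xc where xc: "\<And>z. (\<Sum>i\<in>I. (matvec a d xc i - c i) * matvec a d z i) = 0"
    using Suc.IH by blast
  obtain xa where xa: "\<And>z. (\<Sum>i\<in>I. (matvec a d xa i - a i d) * matvec a d z i) = 0"
    using Suc.IH[of "\<lambda>i. a i d"] by blast
  define w where "w i = a i d - matvec a d xa i" for i
  define r where "r i = c i - matvec a d xc i" for i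
  have w_orth: "(\<Sum>i\<in>I. w i * matvec a d z i) = 0" for z
  proof -
    have "(\<Sum>i\<in>I. w i * matvec a d z i) = - (\<Sum>i\<in>I. (matvec a d xa i - a i d) * matvec a d z i)"
      unfolding sum_negf[symmetric] w_def by (rule sum.cong) (simp_all add: algebra_simps)
    then show ?thesis
      using xa by simp
  qed
  have r_orth: "(\<Sum>i\<in>I. r i * matvec a d z i) = 0" for z
  proof -
    have "(\<Sum>i\<in>I. r i * matvec a d z i) = - (\<Sum>i\<in>I. (matvec a d xc i - c i) * matvec a d z i)"
      unfolding sum_negf[symmetric] r_def by (rule sum.cong) (simp_all add: algebra_simps)
    then show ?thesis
      using xc by simp
  qed
  obtain t where t: "(\<Sum>i\<in>I. (t * w i - r i) * w i) = 0"
    using scalar_normal_equation_solvable[OF fin] by blast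
  define x where "x j = (if j = d then t else xc j - t * xa j)" for j
  have residual: "matvec a (Suc d) x i - c i = t * w i - r i" for i
  proof -
    have "matvec a d x i = matvec a d (\<lambda>j. xc j - t * xa j) i"
      by (rule matvec_cong) (simp add: x_def)
    then show ?thesis
      by (simp add: matvec_Suc matvec_diff matvec_scale x_def w_def r_def algebra_simps)
  qed
  have "(\<Sum>i\<in>I. (matvec a (Suc d) x i - c i) * matvec a (Suc d) z i) = 0" for z
  proof -
    define u where "u i = matvec a d (\<lambda>j. z j + z d * xa j) i" for i
    have "matvec a (Suc d) z i = u i + z d * w i" for i
      unfolding u_def matvec_add matvec_scale by (simp add: w_def matvec_Suc algebra_simps)
    then have "(\<Sum>i\<in>I. (t * w i - r i) * matvec a (Suc d) z i)
        = t * (\<Sum>i\<in>I. w i * u i) - (\<Sum>i\<in>I. r i * u i) + z d * (\<Sum>i\<in>I. (t * w i - r i) * w i)"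
      by (simp add: sum.distrib sum_subtractf sum_distrib_left algebra_simps)
    then show ?thesis
      using t w_orth r_orth by (simp add: residual u_def)
  qed
  then show ?case
    by blast
qed

lemma lsq_cost_minimal_if_normal_equations:
  assumes normal: "\<And>z. (\<Sum>i\<in>I. (matvec a d x i - c i) * matvec a d z i) = 0"
  shows "lsq_cost a c d I x \<le> lsq_cost a c d I y"
proof -
  define u where "u i = matvec a d x i - c i" for i
  define v where "v i = matvec a d (\<lambda>j. y j - x j) i" for i
  have "matvec a d y i - c i = u i + v i" for i
    by (simp add: u_def v_def matvec_diff)
  then have "lsq_cost a c d I y = (\<Sum>i\<in>I. (u i + v i)\<^sup>2)"
    by (simp add: lsq_cost_def)
  also have "\<dots> = (\<Sum>i\<in>I. (u i)\<^sup>2) + 2 * (\<Sum>i\<in>I. u i * v i) + (\<Sum>i\<in>I. (v i)\<^sup>2)"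
    by (simp add: power2_sum sum.distrib sum_distrib_left mult.assoc)
  also have "(\<Sum>i\<in>I. (u i)\<^sup>2) = lsq_cost a c d I x"
    by (simp add: lsq_cost_def u_def)
  finally have "lsq_cost a c d I y
      = lsq_cost a c d I x + 2 * (\<Sum>i\<in>I. u i * v i) + (\<Sum>i\<in>I. (v i)\<^sup>2)" .
  moreover have "(\<Sum>i\<in>I. u i * v i) = 0"
    using normal by (simp add: u_def v_def)
  ultimately show ?thesis
    by (simp add: sum_nonneg)
qed

lemma lsq_minimizer_exists:
  assumes "finite I"
  shows "\<exists>x. \<forall>y. lsq_cost a c d I x \<le> lsq_cost a c d I y"
  using normal_equations_solvable[OF assms] lsq_cost_minimal_if_normal_equations by metis

lemma sq_residual_eq_lsq_cost:
  assumes M: "M \<in> carrier_mat (dim_vec c) d" and x: "x \<in> carrier_vec d"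
  shows "sq_residual M c x
    = lsq_cost (\<lambda>r j. M $$ (r, j)) (\<lambda>r. c $ r) d {..<dim_vec c} (\<lambda>j. x $ j)"
  unfolding sq_residual_def lsq_cost_def
proof (rule sum.cong)
  fix r assume "r \<in> {..<dim_vec c}"
  then have "(M *\<^sub>v x - c) $ r = (\<Sum>j<d. M $$ (r, j) * x $ j) - c $ r"
    using M x by (simp add: scalar_prod_def atLeast0LessThan)
  then show "((M *\<^sub>v x - c) $ r)\<^sup>2
      = (matvec (\<lambda>r j. M $$ (r, j)) d (\<lambda>j. x $ j) r - c $ r)\<^sup>2"
    by (simp add: matvec_def)
qed simp

lemma agg_cost_eq_lsq_cost:
  assumes fin: "finite S"
    and dims: "\<And>i. i \<in> S \<Longrightarrow> A i \<in> carrier_mat (dim_vec (b i)) d"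
    and x: "x \<in> carrier_vec d"
  shows "agg_cost A b S x = lsq_cost (\<lambda>(i, r) j. A i $$ (r, j)) (\<lambda>(i, r). b i $ r) d
           (SIGMA i:S. {..<dim_vec (b i)}) (\<lambda>j. x $ j)"
proof -
  have "agg_cost A b S x
      = (\<Sum>i\<in>S. lsq_cost (\<lambda>r j. A i $$ (r, j)) (\<lambda>r. b i $ r) d {..<dim_vec (b i)} (\<lambda>j. x $ j))"
    unfolding agg_cost_def using sq_residual_eq_lsq_cost[OF dims x] by simp
  also have "\<dots> = lsq_cost (\<lambda>(i, r) j. A i $$ (r, j)) (\<lambda>(i, r). b i $ r) d
           (SIGMA i:S. {..<dim_vec (b i)}) (\<lambda>j. x $ j)"
    unfolding lsq_cost_def matvec_def using fin by (subst sum.Sigma) (auto simp: case_prod_beta)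
  finally show ?thesis .
qed

lemma argmin_vec_agg_cost_nonempty:
  assumes fin: "finite S"
    and dims: "\<And>i. i \<in> S \<Longrightarrow> A i \<in> carrier_mat (dim_vec (b i)) d"
  shows "argmin_vec d (agg_cost A b S) \<noteq> {}"
proof -
  define I where "I = (SIGMA i:S. {..<dim_vec (b i)})"
  define a :: "nat \<times> nat \<Rightarrow> nat \<Rightarrow> real" where "a = (\<lambda>(i, r) j. A i $$ (r, j))"
  define c :: "nat \<times> nat \<Rightarrow> real" where "c = (\<lambda>(i, r). b i $ r)"
  have "finite I"
    using fin by (simp add: I_def)
  then obtain x where x: "\<And>y. lsq_cost a c d I x \<le> lsq_cost a c d I y"
    using lsq_minimizer_exists[of I a c d] by blast
  have cost: "agg_cost A b S y = lsq_cost a c d I (\<lambda>j. y $ j)" if "y \<in> carrier_vec d" for y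
    unfolding a_def c_def I_def by (rule agg_cost_eq_lsq_cost[OF fin dims that])
  have "agg_cost A b S (vec d x) \<le> agg_cost A b S y" if y: "y \<in> carrier_vec d" for y
  proof -
    have "agg_cost A b S (vec d x) = lsq_cost a c d I x"
      unfolding cost[OF vec_carrier] by (rule lsq_cost_cong) simp
    also have "\<dots> \<le> lsq_cost a c d I (\<lambda>j. y $ j)"
      by (rule x)
    also have "\<dots> = agg_cost A b S y"
      by (rule cost[OF y, symmetric])
    finally show ?thesis .
  qed
  then have "vec d x \<in> argmin_vec d (agg_cost A b S)"
    by (simp add: argmin_vec_def)
  then show ?thesis
    by blast
qed

theorem corollary1:
  fixes n d k :: nat and A :: "nat \<Rightarrow> real mat" and b :: "nat \<Rightarrow> real vec" and S :: "nat set"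
  assumes dims: "\<And>i. i \<in> {1..n} \<Longrightarrow> A i \<in> carrier_mat (dim_vec (b i)) d"
    and k_range: "k < n"
    and red: "k_redundant n d A b k"
    and S_sub: "S \<subseteq> {1..n}"
    and S_card: "card S \<ge> n - k"
  shows "argmin_vec d (agg_cost A b S) = argmin_vec d (agg_cost A b {1..n})"
proof -
  obtain T0 where T0: "T0 \<subseteq> {1..n}" "card T0 = n - k"
    using obtain_subset_with_card_n[of "n - k" "{1..n}"] by auto
  define X where "X = argmin_vec d (agg_cost A b T0)"
  have "finite T0"
    using T0(1) by (rule finite_subset) simp
  then have X_ne: "X \<noteq> {}"
    unfolding X_def using T0(1) dims by (intro argmin_vec_agg_cost_nonempty) auto
  have agg: "argmin_vec d (agg_cost A b T)
      = argmin_on (carrier_vec d) (\<lambda>x. \<Sum>i\<in>T. sq_residual (A i) (b i) x)" for T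
    by (simp add: argmin_vec_eq_argmin_on agg_cost_def[abs_def])
  have X_base: "argmin_on (carrier_vec d) (\<lambda>x. \<Sum>i\<in>T. sq_residual (A i) (b i) x) = X"
    if "T \<subseteq> {1..n}" "card T = n - k" for T
    using red that T0 unfolding k_redundant_def X_def agg by blast
  have "argmin_on (carrier_vec d) (\<lambda>x. \<Sum>i\<in>T. sq_residual (A i) (b i) x) = X"
    if "T \<subseteq> {1..n}" "n - k \<le> card T" for T
    by (rule argmin_on_sum_constant_above_card[OF _ _ X_base X_ne that]) (use k_range in simp_all)
  then show ?thesis
    using S_sub S_card k_range by (simp add: agg)
qed

end
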